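(* For each basis structure $(L,T,U,\bar e)$ of the transformed problem whose basic solution $x$ is feasible, it holds that $x_e\notin\mathbb{N}_{\ge0}$ for all edges $e$ of the cycle $C(\bar e)$.
   Context: Problem: directed multigraph $G=(V,E)$, capacities $u_e\in\mathbb{N}_{\ge0}$, costs $c_e\in\mathbb{Z}$, usage fees $b_e\in\mathbb{N}_{\ge0}$, budget $B\in\mathbb{N}_{\ge0}$; a feasible flow is $x\in\mathbb{R}^E$ with flow conservation at every node and $0\le x\le u$; $b(x)=\sum_eb_ex_e$. The transformed problem replaces the budget $B$ by $B'=B+\tfrac12$. A basis structure is a tuple $(L,T,U,\bar e)$, $\bar e\in E$, $L,T,U$ a partition of $E\setminus\{\bar e\}$, $T$ a spanning tree of the underlying undirected graph, such that the unique cycle $C(\bar e)$ in $T\cup\{\bar e\}$ (oriented along $\bar e$, with forward edges $C^+$ and backward edges $C^-$) has $\sum_{C^+}b-\sum_{C^-}b\neq0$. Its basic solution for the transformed problem is the unique $x$ with flow conservation at every node, $x=0$ on $L$, $x=u$ on $U$, and $b(x)=B'$; it is feasible if $0\le x\le u$. *)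

theory Defs
  imports Complex_Main
begin

text \<open>Parallel edges and loops are allowed.
  An undirected traversal step is a pair (e, d): d = True means e is traversed
  from tail to head (forward), d = False means from head to tail (backward).\<close>

definition step_start :: "('e \<Rightarrow> 'v) \<Rightarrow> ('e \<Rightarrow> 'v) \<Rightarrow> 'e \<times> bool \<Rightarrow> 'v" where
  "step_start tai hea s = (if snd s then tai (fst s) else hea (fst s))"

definition step_end :: "('e \<Rightarrow> 'v) \<Rightarrow> ('e \<Rightarrow> 'v) \<Rightarrow> 'e \<times> bool \<Rightarrow> 'v" where
  "step_end tai hea s = (if snd s then hea (fst s) else tai (fst s))"

definition is_cycle :: "('e \<Rightarrow> 'v) \<Rightarrow> ('e \<Rightarrow> 'v) \<Rightarrow> 'e set \<Rightarrow> ('e \<times> bool) list \<Rightarrow> bool" where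
  "is_cycle tai hea F c \<longleftrightarrow>
     c \<noteq> [] \<and> set (map fst c) \<subseteq> F \<and> distinct (map fst c) \<and>
     distinct (map (step_start tai hea) c) \<and>
     (\<forall>i < length c. step_end tai hea (c ! i) = step_start tai hea (c ! ((i + 1) mod length c)))"

definition undir_rel :: "('e \<Rightarrow> 'v) \<Rightarrow> ('e \<Rightarrow> 'v) \<Rightarrow> 'e set \<Rightarrow> ('v \<times> 'v) set" where
  "undir_rel tai hea F = {(tai e, hea e) | e. e \<in> F} \<union> {(hea e, tai e) | e. e \<in> F}"

definition spanning_tree :: "'v set \<Rightarrow> 'e set \<Rightarrow> ('e \<Rightarrow> 'v) \<Rightarrow> ('e \<Rightarrow> 'v) \<Rightarrow> 'e set \<Rightarrow> bool" where
  "spanning_tree V E tai hea T \<longleftrightarrow>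
     T \<subseteq> E \<and>
     (\<forall>u\<in>V. \<forall>v\<in>V. (u, v) \<in> (undir_rel tai hea T)\<^sup>*) \<and>
     \<not> (\<exists>c. is_cycle tai hea T c)"

text \<open>C(ebar) is the unique cycle in T \<union> {ebar}; it is represented by any cycle list in
  T \<union> {ebar} traversing ebar forward (unique up to rotation since T is a spanning tree).\<close>
definition fund_cycle :: "('e \<Rightarrow> 'v) \<Rightarrow> ('e \<Rightarrow> 'v) \<Rightarrow> 'e set \<Rightarrow> 'e \<Rightarrow> ('e \<times> bool) list \<Rightarrow> bool" where
  "fund_cycle tai hea T eb c \<longleftrightarrow> is_cycle tai hea (insert eb T) c \<and> (eb, True) \<in> set c"

definition cycle_fee :: "('e \<Rightarrow> nat) \<Rightarrow> ('e \<times> bool) list \<Rightarrow> int" where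
  "cycle_fee b c = (\<Sum>s\<leftarrow>c. if snd s then int (b (fst s)) else - int (b (fst s)))"

definition basis_structure ::
  "'v set \<Rightarrow> 'e set \<Rightarrow> ('e \<Rightarrow> 'v) \<Rightarrow> ('e \<Rightarrow> 'v) \<Rightarrow> ('e \<Rightarrow> nat) \<Rightarrow>
   'e set \<Rightarrow> 'e set \<Rightarrow> 'e set \<Rightarrow> 'e \<Rightarrow> bool" where
  "basis_structure V E tai hea b L T U eb \<longleftrightarrow>
     eb \<in> E \<and> L \<union> T \<union> U = E - {eb} \<and>
     L \<inter> T = {} \<and> L \<inter> U = {} \<and> T \<inter> U = {} \<and>
     spanning_tree V E tai hea T \<and>
     (\<forall>c. fund_cycle tai hea T eb c \<longrightarrow> cycle_fee b c \<noteq> 0)"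

definition flow_conservation :: "'v set \<Rightarrow> 'e set \<Rightarrow> ('e \<Rightarrow> 'v) \<Rightarrow> ('e \<Rightarrow> 'v) \<Rightarrow> ('e \<Rightarrow> real) \<Rightarrow> bool" where
  "flow_conservation V E tai hea x \<longleftrightarrow>
     (\<forall>v\<in>V. (\<Sum>e\<in>{e\<in>E. hea e = v}. x e) = (\<Sum>e\<in>{e\<in>E. tai e = v}. x e))"

text \<open>x is the basic solution of the basis structure (L,T,U,ebar) for the transformed
  problem with budget B' = B + 1/2 (it is unique, so "the" basic solution).\<close>
definition basic_solution ::
  "'v set \<Rightarrow> 'e set \<Rightarrow> ('e \<Rightarrow> 'v) \<Rightarrow> ('e \<Rightarrow> 'v) \<Rightarrow> ('e \<Rightarrow> nat) \<Rightarrow> ('e \<Rightarrow> nat) \<Rightarrow> nat \<Rightarrow>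
   'e set \<Rightarrow> 'e set \<Rightarrow> 'e set \<Rightarrow> 'e \<Rightarrow> ('e \<Rightarrow> real) \<Rightarrow> bool" where
  "basic_solution V E tai hea u b B L T U eb x \<longleftrightarrow>
     flow_conservation V E tai hea x \<and>
     (\<forall>e\<in>L. x e = 0) \<and> (\<forall>e\<in>U. x e = real (u e)) \<and>
     (\<Sum>e\<in>E. real (b e) * x e) = real B + 1/2"

definition feasible_flow :: "'e set \<Rightarrow> ('e \<Rightarrow> nat) \<Rightarrow> ('e \<Rightarrow> real) \<Rightarrow> bool" where
  "feasible_flow E u x \<longleftrightarrow> (\<forall>e\<in>E. 0 \<le> x e \<and> x e \<le> real (u e))"

end

theory Submission
  imports Defs
begin

text \<open>Subtracting x(eb) times the signed incidence vector of the cycle C(eb) from x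
  leaves a flow w that is conserved at every vertex and integral off the tree T: it vanishes
  on eb and equals 0 or u e on L and U. A conserved flow that is integral off a forest is
  integral everywhere, since its non-integral edges would form a nonempty subgraph without
  leaves and hence contain a cycle. So if x e were an integer for an edge e of C(eb), then
  so would be x(eb) = \<plusminus>(x e - w e), and the budget b(x) = b(w) + x(eb) * (b(C+) - b(C-))
  would be an integer, contradicting b(x) = B + 1/2.\<close>

definition is_path :: "('e \<Rightarrow> 'v) \<Rightarrow> ('e \<Rightarrow> 'v) \<Rightarrow> 'e set \<Rightarrow> ('e \<times> bool) list \<Rightarrow> bool" where
  "is_path tai hea F p \<longleftrightarrow> p \<noteq> [] \<and> set (map fst p) \<subseteq> F \<and> distinct (map fst p) \<and>
     distinct (map (step_start tai hea) p @ [step_end tai hea (last p)]) \<and>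
     (\<forall>i. Suc i < length p \<longrightarrow> step_end tai hea (p ! i) = step_start tai hea (p ! Suc i))"

lemma step_start_end_endpoints:
  "{step_start tai hea s, step_end tai hea s} = {tai (fst s), hea (fst s)}"
  by (auto simp: step_start_def step_end_def)

lemma is_cycle_mono: "is_cycle tai hea F c \<Longrightarrow> F \<subseteq> F' \<Longrightarrow> is_cycle tai hea F' c"
  by (auto simp: is_cycle_def)

lemma loop_free_if_acyclic:
  assumes "\<nexists>c. is_cycle tai hea F c" and "e \<in> F"
  shows "tai e \<noteq> hea e"
proof
  assume "tai e = hea e"
  then have "is_cycle tai hea F [(e, True)]"
    using \<open>e \<in> F\<close> by (simp add: is_cycle_def step_start_def step_end_def)
  with assms(1) show False by blast
qed

lemma is_path_length_le_card:
  assumes "finite F" and "is_path tai hea F p"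
  shows "length p \<le> card F"
  using assms by (metis card_mono distinct_card is_path_def length_map)

lemma is_path_edge_at_end:
  assumes "is_path tai hea F p" and "i < length p"
    and "step_end tai hea (last p) \<in> {tai (fst (p ! i)), hea (fst (p ! i))}"
  shows "p ! i = last p"
proof -
  let ?ss = "step_start tai hea" and ?se = "step_end tai hea"
  let ?v = "?se (last p)"
  have p: "p \<noteq> []" "distinct (map ?ss p @ [?v])"
    "\<forall>i. Suc i < length p \<longrightarrow> ?se (p ! i) = ?ss (p ! Suc i)"
    using assms(1) by (auto simp: is_path_def)
  have not_start: "?v \<noteq> ?ss (p ! k)" if "k < length p" for k
  proof -
    have "?v \<notin> set (map ?ss p)" using p(2) by simp
    then show ?thesis using that by (metis length_map nth_map nth_mem)
  qed
  have "?v = ?se (p ! i)"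
    using assms(3) step_start_end_endpoints[of tai hea "p ! i"] not_start[OF assms(2)] by auto
  then have "\<not> Suc i < length p"
    using p(3) not_start by force
  then have "i = length p - 1"
    using assms(2) by simp
  then show ?thesis
    using assms(2) p(1) by (simp add: last_conv_nth)
qed

lemma is_path_snoc:
  assumes "is_path tai hea F p" and "fst s \<in> F" and "fst s \<notin> set (map fst p)"
    and "step_start tai hea s = step_end tai hea (last p)"
    and "step_end tai hea s \<notin> set (map (step_start tai hea) p)"
    and "step_end tai hea s \<noteq> step_start tai hea s"
  shows "is_path tai hea F (p @ [s])"
  unfolding is_path_def
proof (intro conjI allI impI)
  fix i assume i: "Suc i < length (p @ [s])"
  show "step_end tai hea ((p @ [s]) ! i) = step_start tai hea ((p @ [s]) ! Suc i)"
  proof (cases "Suc i < length p")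
    case True
    then show ?thesis using assms(1) by (simp add: is_path_def nth_append)
  next
    case False
    with i have "i = length p - 1" by simp
    moreover have "p \<noteq> []" using assms(1) by (simp add: is_path_def)
    ultimately show ?thesis using assms(4) by (simp add: nth_append last_conv_nth)
  qed
qed (use assms in \<open>auto simp: is_path_def\<close>)

lemma is_cycle_close_path:
  assumes "is_path tai hea F p" and "fst s \<in> F" and "fst s \<notin> set (map fst p)"
    and "step_start tai hea s = step_end tai hea (last p)"
    and "j < length p" and "step_start tai hea (p ! j) = step_end tai hea s"
  shows "is_cycle tai hea F (drop j p @ [s])"
proof -
  let ?ss = "step_start tai hea" and ?se = "step_end tai hea"
  let ?c = "drop j p @ [s]"
  have p: "p \<noteq> []" "set (map fst p) \<subseteq> F" "distinct (map fst p)"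
    "distinct (map ?ss p @ [?se (last p)])"
    "\<forall>i. Suc i < length p \<longrightarrow> ?se (p ! i) = ?ss (p ! Suc i)"
    using assms(1) by (auto simp: is_path_def)
  have len: "length ?c = Suc (length p - j)"
    using assms(5) by simp
  have c_nth: "?c ! k = p ! (j + k)" if "k < length p - j" for k
    using that assms(5) by (simp add: nth_append)
  have c_last: "?c ! (length p - j) = s"
    by (simp add: nth_append)
  have closed: "?se (?c ! i) = ?ss (?c ! ((i + 1) mod length ?c))" if i: "i < length ?c" for i
  proof -
    consider "Suc i < length p - j" | "Suc i = length p - j" | "i = length p - j"
      using i len by linarith
    then show ?thesis
    proof cases
      case 1
      then show ?thesis using p(5) c_nth len by simp
    next
      case 2
      then have "j + i = length p - 1" by simp
      then have "p ! (j + i) = last p" using p(1) by (simp add: last_conv_nth)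
      with 2 show ?thesis using assms(4) c_nth c_last len by simp
    next
      case 3
      then show ?thesis using assms(5,6) c_nth[of 0] c_last len by simp
    qed
  qed
  have "fst s \<notin> set (map fst (drop j p))" "?ss s \<notin> set (map ?ss (drop j p))"
    using assms(3,4) p(4) by (auto simp: drop_map[symmetric] dest: in_set_dropD)
  moreover have "set (map fst (drop j p)) \<subseteq> F" 
    using p(2) set_drop_subset[of j p] by auto
  moreover have "distinct (map fst (drop j p))" "distinct (map ?ss (drop j p))"
    using p(3,4) by (simp_all add: drop_map[symmetric] distinct_drop)
  ultimately show ?thesis
    using assms(2) closed unfolding is_cycle_def by auto
qed

lemma ex_cycle_if_no_leaf:
  assumes "finite F" and "F \<noteq> {}" and loop_free: "\<forall>e\<in>F. tai e \<noteq> hea e"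
    and no_leaf: "\<forall>e\<in>F. \<forall>v\<in>{tai e, hea e}. \<exists>e'\<in>F. e' \<noteq> e \<and> v \<in> {tai e', hea e'}"
  shows "\<exists>c. is_cycle tai hea F c"
proof -
  let ?ss = "step_start tai hea" and ?se = "step_end tai hea"
  obtain e0 where "e0 \<in> F" using assms(2) by blast
  then have "is_path tai hea F [(e0, True)]"
    using loop_free by (auto simp: is_path_def step_start_def step_end_def)
  then obtain p where p: "is_path tai hea F p"
    and longest: "\<And>q. is_path tai hea F q \<Longrightarrow> length q \<le> length p"
    using Lattices_Big.ex_has_greatest_nat[of "is_path tai hea F" _ length "Suc (card F)"]
      is_path_length_le_card[OF assms(1)] by (metis less_Suc_eq_le)
  define v where "v = ?se (last p)"
  have "last p \<in> set p" and p_edges: "set (map fst p) \<subseteq> F"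
    using p by (auto simp: is_path_def)
  then have "fst (last p) \<in> F" by auto
  moreover have "v \<in> {tai (fst (last p)), hea (fst (last p))}"
    using step_start_end_endpoints[of tai hea "last p"] by (auto simp: v_def)
  ultimately obtain e where e: "e \<in> F" "e \<noteq> fst (last p)" "v \<in> {tai e, hea e}"
    using no_leaf by blast
  define s where "s = (e, tai e = v)"
  have s_start: "?ss s = v" and s_end: "?se s \<noteq> v"
    using e loop_free by (auto simp: s_def step_start_def step_end_def)
  have s_edge: "fst s \<in> F"
    using e(1) by (simp add: s_def)
  have s_new: "fst s \<notin> set (map fst p)"
  proof
    assume "fst s \<in> set (map fst p)"
    then obtain i where "i < length p" "fst (p ! i) = e"
      by (auto simp: s_def in_set_conv_nth)
    with is_path_edge_at_end[OF p] e show False by (auto simp: v_def)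
  qed
  show ?thesis
  proof (cases "?se s \<in> set (map ?ss p)")
    case True
    then obtain j where "j < length p" "?ss (p ! j) = ?se s"
      by (auto simp: in_set_conv_nth)
    then show ?thesis
      using is_cycle_close_path[OF p s_edge s_new] s_start by (auto simp: v_def)
  next
    case False
    then have "is_path tai hea F (p @ [s])"
      using is_path_snoc[OF p s_edge s_new] s_start s_end by (simp add: v_def)
    with longest show ?thesis by fastforce
  qed
qed

lemma is_cycle_step_end_rotate1:
  assumes "is_cycle tai hea F c"
  shows "map (step_end tai hea) c = rotate1 (map (step_start tai hea) c)"
  using assms by (intro nth_equalityI) (auto simp: is_cycle_def nth_rotate1)

lemma sum_list_rotate1: "sum_list (rotate1 xs) = sum_list (xs :: 'a::comm_monoid_add list)"
  by (cases xs) (simp_all add: add.commute)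

lemma sum_list_cycle_step_end:
  fixes f :: "'v \<Rightarrow> 'a::comm_monoid_add"
  assumes "is_cycle tai hea F c"
  shows "(\<Sum>s\<leftarrow>c. f (step_end tai hea s)) = (\<Sum>s\<leftarrow>c. f (step_start tai hea s))"
proof -
  have "(\<Sum>s\<leftarrow>c. f (step_end tai hea s)) = sum_list (map f (map (step_end tai hea) c))"
    by (simp add: comp_def)
  also have "\<dots> = sum_list (rotate1 (map f (map (step_start tai hea) c)))"
    by (simp add: is_cycle_step_end_rotate1[OF assms] rotate1_map)
  also have "\<dots> = (\<Sum>s\<leftarrow>c. f (step_start tai hea s))"
    by (simp add: sum_list_rotate1 comp_def)
  finally show ?thesis .
qed

definition step_sign :: "'e \<times> bool \<Rightarrow> real" where
  "step_sign s = (if snd s then 1 else -1)"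

definition cycle_incidence :: "('e \<times> bool) list \<Rightarrow> 'e \<Rightarrow> real" where
  "cycle_incidence c e = (\<Sum>s\<leftarrow>c. if fst s = e then step_sign s else 0)"

lemma cycle_incidence_eq_0: "e \<notin> set (map fst c) \<Longrightarrow> cycle_incidence c e = 0"
  unfolding cycle_incidence_def by (induction c) auto

lemma cycle_incidence_step:
  "distinct (map fst c) \<Longrightarrow> s \<in> set c \<Longrightarrow> cycle_incidence c (fst s) = step_sign s"
proof (induction c)
  case (Cons s' c)
  then show ?case
    using cycle_incidence_eq_0[of "fst s" c] by (auto simp: cycle_incidence_def)
qed simp

lemma sum_mult_cycle_incidence:
  assumes "finite E" and "set (map fst c) \<subseteq> E"
  shows "(\<Sum>e\<in>E. g e * cycle_incidence c e) = (\<Sum>s\<leftarrow>c. g (fst s) * step_sign s)"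
  using assms(2)
proof (induction c)
  case (Cons s c)
  have "(\<Sum>e\<in>E. g e * (if fst s = e then step_sign s else 0)) = g (fst s) * step_sign s"
    using Cons.prems assms(1) by (simp add: if_distrib[of "(*) _"] cong: if_cong)
  with Cons show ?case
    by (simp add: cycle_incidence_def distrib_left sum.distrib)
qed (simp add: cycle_incidence_def)

lemma cycle_fee_eq_sum_list: "real_of_int (cycle_fee b c) = (\<Sum>s\<leftarrow>c. real (b (fst s)) * step_sign s)"
  by (induction c) (auto simp: cycle_fee_def step_sign_def)

lemma flow_conservation_cycle_incidence:
  assumes "finite E" and "is_cycle tai hea F c" and "set (map fst c) \<subseteq> E"
  shows "flow_conservation V E tai hea (cycle_incidence c)"
  unfolding flow_conservation_def
proof
  fix v
  let ?ind = "\<lambda>b. if b then 1 else 0 :: real"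
  have at_v: "(\<Sum>e\<in>{e\<in>E. P e}. cycle_incidence c e) = (\<Sum>s\<leftarrow>c. ?ind (P (fst s)) * step_sign s)"
    for P
    using sum_mult_cycle_incidence[OF assms(1,3), of "\<lambda>e. ?ind (P e)"] assms(1)
    by (simp add: sum.inter_filter if_distrib[of "\<lambda>x. x * _"] cong: if_cong)
  have "?ind (hea (fst s) = v) * step_sign s - ?ind (tai (fst s) = v) * step_sign s
      = ?ind (step_end tai hea s = v) - ?ind (step_start tai hea s = v)" for s
    by (auto simp: step_sign_def step_start_def step_end_def)
  then have "(\<Sum>s\<leftarrow>c. ?ind (hea (fst s) = v) * step_sign s) - (\<Sum>s\<leftarrow>c. ?ind (tai (fst s) = v) * step_sign s)
      = (\<Sum>s\<leftarrow>c. ?ind (step_end tai hea s = v)) - (\<Sum>s\<leftarrow>c. ?ind (step_start tai hea s = v))"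
    by (simp add: sum_list_subtractf[symmetric])
  also have "\<dots> = 0"
    using sum_list_cycle_step_end[OF assms(2), of "\<lambda>u. ?ind (u = v)"] by simp
  finally show "(\<Sum>e\<in>{e\<in>E. hea e = v}. cycle_incidence c e) = (\<Sum>e\<in>{e\<in>E. tai e = v}. cycle_incidence c e)"
    by (simp add: at_v)
qed

lemma flow_conservation_diff_scaled:
  assumes "flow_conservation V E tai hea f" and "flow_conservation V E tai hea g"
  shows "flow_conservation V E tai hea (\<lambda>e. f e - r * g e)"
  using assms by (simp add: flow_conservation_def sum_subtractf sum_distrib_left[symmetric])

lemma flow_conservation_UNIV:
  assumes "flow_conservation V E tai hea f" and "\<forall>e\<in>E. tai e \<in> V \<and> hea e \<in> V"
  shows "flow_conservation UNIV E tai hea f"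
  unfolding flow_conservation_def
proof
  fix v
  show "(\<Sum>e\<in>{e\<in>E. hea e = v}. f e) = (\<Sum>e\<in>{e\<in>E. tai e = v}. f e)"
  proof (cases "v \<in> V")
    case True
    with assms(1) show ?thesis by (simp add: flow_conservation_def)
  next
    case False
    with assms(2) have "{e\<in>E. hea e = v} = {}" "{e\<in>E. tai e = v} = {}" by auto
    then show ?thesis by (simp only: sum.empty)
  qed
qed

lemma flow_conservation_Ints_at_vertex:
  fixes w :: "'e \<Rightarrow> real"
  assumes "flow_conservation UNIV E tai hea w" and "finite E" and "e \<in> E"
    and "tai e \<noteq> hea e" and "v \<in> {tai e, hea e}"
    and others: "\<forall>e'\<in>E - {e}. v \<in> {tai e', hea e'} \<longrightarrow> w e' \<in> \<int>"
  shows "w e \<in> \<int>"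
proof -
  define rest where "rest P = (\<Sum>e'\<in>{e'\<in>E. P e'} - {e}. w e')" for P
  have rest_Ints: "rest (\<lambda>e'. hea e' = v) \<in> \<int>" "rest (\<lambda>e'. tai e' = v) \<in> \<int>"
    using others unfolding rest_def by (auto intro!: Ints_sum)
  have split: "(\<Sum>e'\<in>{e'\<in>E. P e'}. w e') = (if P e then w e else 0) + rest P" for P
    using assms(2,3) by (simp add: rest_def sum_diff1)
  have "(if hea e = v then w e else 0) + rest (\<lambda>e'. hea e' = v)
      = (if tai e = v then w e else 0) + rest (\<lambda>e'. tai e' = v)"
    using assms(1) split[of "\<lambda>e'. hea e' = v"] split[of "\<lambda>e'. tai e' = v"]
    by (simp add: flow_conservation_def)
  with assms(4,5) have "w e = rest (\<lambda>e'. tai e' = v) - rest (\<lambda>e'. hea e' = v)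
      \<or> w e = rest (\<lambda>e'. hea e' = v) - rest (\<lambda>e'. tai e' = v)"
    by (auto split: if_splits)
  with rest_Ints show ?thesis by auto
qed

lemma flow_conservation_Ints_off_forest:
  fixes w :: "'e \<Rightarrow> real"
  assumes "flow_conservation UNIV E tai hea w" and "finite E" and "T \<subseteq> E"
    and acyclic: "\<nexists>c. is_cycle tai hea T c" and off_T: "\<forall>e\<in>E - T. w e \<in> \<int>"
  shows "\<forall>e\<in>E. w e \<in> \<int>"
proof (rule ccontr)
  define N where "N = {e\<in>T. w e \<notin> \<int>}"
  assume "\<not> (\<forall>e\<in>E. w e \<in> \<int>)"
  with off_T have "N \<noteq> {}" by (auto simp: N_def)
  moreover have "finite N" "N \<subseteq> T"
    using assms(2,3) by (auto simp: N_def intro: finite_subset)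
  moreover have loop_free: "\<forall>e\<in>N. tai e \<noteq> hea e"
    using loop_free_if_acyclic[OF acyclic] \<open>N \<subseteq> T\<close> by blast
  moreover have "\<forall>e\<in>N. \<forall>v\<in>{tai e, hea e}. \<exists>e'\<in>N. e' \<noteq> e \<and> v \<in> {tai e', hea e'}"
  proof (intro ballI, rule ccontr)
    fix e v assume "e \<in> N" "v \<in> {tai e, hea e}"
      and "\<not> (\<exists>e'\<in>N. e' \<noteq> e \<and> v \<in> {tai e', hea e'})"
    then have "\<forall>e'\<in>E - {e}. v \<in> {tai e', hea e'} \<longrightarrow> w e' \<in> \<int>"
      using off_T by (auto simp: N_def)
    then have "w e \<in> \<int>"
      using flow_conservation_Ints_at_vertex[OF assms(1,2)] \<open>e \<in> N\<close> \<open>N \<subseteq> T\<close> assms(3)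
        loop_free \<open>v \<in> _\<close> by blast
    with \<open>e \<in> N\<close> show False by (simp add: N_def)
  qed
  ultimately obtain c where "is_cycle tai hea N c"
    using ex_cycle_if_no_leaf by blast
  then have "is_cycle tai hea T c"
    using \<open>N \<subseteq> T\<close> by (rule is_cycle_mono)
  with acyclic show False by blast
qed

lemma of_nat_plus_half_not_Ints: "real n + 1/2 \<notin> \<int>"
proof
  assume "real n + 1/2 \<in> \<int>"
  then obtain k where "real n + 1/2 = of_int k" by (auto elim: Ints_cases)
  then have "2 * int n + 1 = 2 * k" by linarith
  then show False by presburger
qed

lemma sum_mult_eq_cycle_fee_shift:
  assumes "finite E" and "set (map fst c) \<subseteq> E"
  shows "(\<Sum>e\<in>E. real (b e) * x e)
    = (\<Sum>e\<in>E. real (b e) * (x e - r * cycle_incidence c e)) + r * real_of_int (cycle_fee b c)"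
proof -
  have "(\<Sum>e\<in>E. real (b e) * x e)
      = (\<Sum>e\<in>E. real (b e) * (x e - r * cycle_incidence c e)) + r * (\<Sum>e\<in>E. real (b e) * cycle_incidence c e)"
    by (simp add: algebra_simps sum.distrib sum_subtractf sum_distrib_left)
  then show ?thesis
    by (simp add: sum_mult_cycle_incidence[OF assms] cycle_fee_eq_sum_list)
qed

lemma basic_solution_minus_cycle_Ints:
  assumes "finite E" and ends: "\<forall>e\<in>E. tai e \<in> V \<and> hea e \<in> V"
    and bs: "basis_structure V E tai hea b L T U eb"
    and sol: "basic_solution V E tai hea u b B L T U eb x"
    and cyc: "fund_cycle tai hea T eb c"
  shows "\<forall>e\<in>E. x e - x eb * cycle_incidence c e \<in> \<int>"
proof -
  have partition: "eb \<in> E" "L \<union> T \<union> U = E - {eb}" "T \<subseteq> E" "\<nexists>c. is_cycle tai hea T c"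
    using bs by (auto simp: basis_structure_def spanning_tree_def)
  have c: "is_cycle tai hea (insert eb T) c" "(eb, True) \<in> set c"
    using cyc by (auto simp: fund_cycle_def)
  then have c_edges: "set (map fst c) \<subseteq> insert eb T" and "distinct (map fst c)"
    by (auto simp: is_cycle_def)
  with partition have "set (map fst c) \<subseteq> E" by blast
  have "flow_conservation UNIV E tai hea (\<lambda>e. x e - x eb * cycle_incidence c e)"
    using sol flow_conservation_cycle_incidence[OF assms(1) c(1) \<open>set _ \<subseteq> E\<close>]
    by (auto simp: basic_solution_def intro!: flow_conservation_UNIV[OF _ ends]
        flow_conservation_diff_scaled)
  moreover have "x e - x eb * cycle_incidence c e \<in> \<int>" if "e \<in> E - T" for e
  proof (cases "e = eb")
    case True
    with cycle_incidence_step[OF \<open>distinct _\<close> c(2)] show ?thesis by (simp add: step_sign_def)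
  next
    case False
    with that partition(2) c_edges have "e \<in> L \<union> U" "e \<notin> set (map fst c)" by auto
    with sol show ?thesis by (auto simp: basic_solution_def cycle_incidence_eq_0)
  qed
  ultimately show ?thesis
    using flow_conservation_Ints_off_forest[OF _ assms(1) partition(3,4)] by blast
qed

theorem lemma3:
  fixes V :: "'v set" and E :: "'e set" and tai hea :: "'e \<Rightarrow> 'v"
    and u b :: "'e \<Rightarrow> nat" and c :: "'e \<Rightarrow> int" and B :: nat
    and L T U :: "'e set" and eb :: 'e and x :: "'e \<Rightarrow> real"
  assumes "finite V" and "finite E"
    and "\<forall>e\<in>E. tai e \<in> V \<and> hea e \<in> V"
    and "basis_structure V E tai hea b L T U eb"
    and "basic_solution V E tai hea u b B L T U eb x"
    and "feasible_flow E u x"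
  shows "\<forall>cyc. fund_cycle tai hea T eb cyc \<longrightarrow> (\<forall>e\<in>set (map fst cyc). x e \<notin> \<nat>)"
proof (intro allI impI ballI notI)
  fix cyc e
  assume cyc: "fund_cycle tai hea T eb cyc" and "e \<in> set (map fst cyc)" and "x e \<in> \<nat>"
  define w where "w e = x e - x eb * cycle_incidence cyc e" for e
  have w_Ints: "\<forall>e\<in>E. w e \<in> \<int>"
    using basic_solution_minus_cycle_Ints[OF assms(2,3,4,5) cyc] by (simp add: w_def)
  have c: "set (map fst cyc) \<subseteq> E" "distinct (map fst cyc)"
    using cyc assms(4) by (auto simp: fund_cycle_def is_cycle_def basis_structure_def spanning_tree_def)
  obtain s where "s \<in> set cyc" "fst s = e"
    using \<open>e \<in> _\<close> by auto
  then have "cycle_incidence cyc e = step_sign s"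
    using cycle_incidence_step[OF c(2)] by blast
  then have "x eb = (x e - w e) * step_sign s"
    by (simp add: w_def step_sign_def)
  moreover have "x e - w e \<in> \<int>"
    using w_Ints c(1) \<open>e \<in> _\<close> \<open>x e \<in> \<nat>\<close> Nats_subset_Ints by (auto intro: Ints_diff)
  ultimately have "x eb \<in> \<int>"
    by (simp add: step_sign_def)
  moreover have "real B + 1/2 = (\<Sum>e\<in>E. real (b e) * w e) + x eb * real_of_int (cycle_fee b cyc)"
    using assms(5) sum_mult_eq_cycle_fee_shift[OF assms(2) c(1), of b x "x eb"]
    by (simp add: basic_solution_def w_def)
  ultimately have "real B + 1/2 \<in> \<int>"
    using w_Ints by (auto intro!: Ints_sum Ints_mult)
  then show False
    using of_nat_plus_half_not_Ints by blast
qed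

end
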